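(* In the message-passing model (already with $k=2$ sites), without edge duplication, any randomized protocol that decides with error probability at most $1/3$ on every input whether the graph $G$ (with $n$ vertices and $m$ edges) contains a cycle uses $\Omega(\min\{m,n\})$ bits of communication.
   Context: Message-passing model: $k$ sites $P_1,\dots,P_k$, each holding a private input; two-way point-to-point channels between every pair of sites; at the end some site outputs the answer; cost is total bits exchanged. Graph setting: $G=(V,E)$ is an undirected graph with $|V|=n$, $|E|=m$; each site $P_i$ holds a subgraph $G_i\subseteq G$ on the common vertex set, and $G$ is the union of the $G_i$. "Without edge duplication" means the edge sets of the $G_i$ are pairwise disjoint. $R^{\delta}(g)$ denotes the minimum, over randomized protocols that on every input output $g$ correctly with probability at least $1-\delta$, of the maximum communication over all inputs and random choices. *)

theory Defs
  imports "HOL-Probability.Probability"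
begin

text \<open>A node owned by site 1 (resp. site 2) sends one bit computed from that site's
  private input; the history is encoded by the position in the tree.\<close>
datatype ('a, 'b) proto =
    Out bool
  | Send1 "'a \<Rightarrow> bool" "('a, 'b) proto" "('a, 'b) proto"
  | Send2 "'b \<Rightarrow> bool" "('a, 'b) proto" "('a, 'b) proto"

fun run :: "('a, 'b) proto \<Rightarrow> 'a \<Rightarrow> 'b \<Rightarrow> bool" where
  "run (Out r) x y = r"
| "run (Send1 f p0 p1) x y = (if f x then run p1 x y else run p0 x y)"
| "run (Send2 g p0 p1) x y = (if g y then run p1 x y else run p0 x y)"

fun cost :: "('a, 'b) proto \<Rightarrow> 'a \<Rightarrow> 'b \<Rightarrow> nat" where
  "cost (Out r) x y = 0"
| "cost (Send1 f p0 p1) x y = Suc (if f x then cost p1 x y else cost p0 x y)"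
| "cost (Send2 g p0 p1) x y = Suc (if g y then cost p1 x y else cost p0 x y)"

definition edges_on :: "nat \<Rightarrow> nat set set" where
  "edges_on n = {{u, v} | u v. u \<noteq> v \<and> u < n \<and> v < n}"

definition has_cycle :: "nat set set \<Rightarrow> bool" where
  "has_cycle E \<longleftrightarrow> (\<exists>vs. 3 \<le> length vs \<and> distinct vs \<and>
     (\<forall>i < length vs. {vs ! i, vs ! ((i + 1) mod length vs)} \<in> E))"

text \<open>Valid inputs: site 1 holds E1, site 2 holds E2, edge-disjoint (no edge
  duplication), graph on n vertices with at most m edges.\<close>
definition valid_input :: "nat \<Rightarrow> nat \<Rightarrow> nat set set \<Rightarrow> nat set set \<Rightarrow> bool" where
  "valid_input n m E1 E2 \<longleftrightarrow> E1 \<subseteq> edges_on n \<and> E2 \<subseteq> edges_on n \<and>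
     E1 \<inter> E2 = {} \<and> card (E1 \<union> E2) \<le> m"

text \<open>A (public-coin) randomized protocol is a distribution over deterministic
  protocols; it decides cycle-freeness with error at most delta on every valid input.\<close>
definition decides_cycle :: "nat \<Rightarrow> nat \<Rightarrow> real \<Rightarrow> (nat set set, nat set set) proto pmf \<Rightarrow> bool" where
  "decides_cycle n m \<delta> P \<longleftrightarrow> (\<forall>E1 E2. valid_input n m E1 E2 \<longrightarrow>
     measure_pmf.prob P {p. run p E1 E2 = has_cycle (E1 \<union> E2)} \<ge> 1 - \<delta>)"

end

theory Submission
  imports Defs
begin

text \<open>A reduction from inner product mod 2. For \<open>x, y \<subseteq> {..<k}\<close> the two sites build a ladder
  graph with \<open>4k + 2\<close> vertices and at most \<open>4k + 1\<close> edges in which the walk from vertex 0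
  switches track exactly at the levels in \<open>x \<inter> y\<close>; a closing edge turns the walk into a cycle
  iff \<open>card (x \<inter> y)\<close> is even, and otherwise the graph is a forest. By Lindsey's lemma every
  rectangle of the inner product matrix has discrepancy at most \<open>2 ^ (3k/2)\<close>, whereas a protocol
  of cost \<open>d\<close> splits the input matrix into \<open>2 ^ d\<close> rectangles on which its output is constant.
  Being correct with probability \<open>2/3\<close> on all \<open>4 ^ k\<close> inputs thus forces
  \<open>4 ^ k / 3 \<le> 2 ^ d * 2 ^ (3k/2)\<close>, i.e. \<open>d = \<Omega>(k) = \<Omega>(min m n)\<close>.\<close>

section \<open>Cycles\<close>

text \<open>Both cycle neighbours of a vertex of maximal rank would have to be its parent.\<close>
lemma no_cycle_if_parent_ranking:
  fixes rank :: "nat \<Rightarrow> 'r::linorder"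
  assumes ranked: "\<And>a b. {a, b} \<in> E \<Longrightarrow> a \<noteq> b \<Longrightarrow>
    rank a \<noteq> rank b \<and> (rank a < rank b \<longrightarrow> a = parent b)"
  shows "\<not> has_cycle E"
proof
  assume "has_cycle E"
  then obtain vs where len: "3 \<le> length vs" and dist: "distinct vs"
    and edge: "\<forall>i < length vs. {vs ! i, vs ! ((i + 1) mod length vs)} \<in> E"
    unfolding has_cycle_def by blast
  define l where "l = length vs"
  have "Max (rank ` set vs) \<in> rank ` set vs"
    using len by (intro Max_in) auto
  then obtain j where j: "j < l" and top: "rank (vs ! j) = Max (rank ` set vs)"
    by (auto simp: in_set_conv_nth l_def)
  have below_top: "rank (vs ! i) \<le> rank (vs ! j)" if "i < l" for i
    using that top by (simp add: l_def)
  define nxt where "nxt = (if j + 1 = l then 0 else j + 1)"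
  define prv where "prv = (if j = 0 then l - 1 else j - 1)"
  have idx: "nxt < l" "prv < l" "nxt \<noteq> j" "prv \<noteq> j" "nxt \<noteq> prv"
    using len j by (auto simp: nxt_def prv_def l_def)
  have "(j + 1) mod l = nxt" "(prv + 1) mod l = j"
    using len j by (auto simp: nxt_def prv_def l_def)
  then have "{vs ! nxt, vs ! j} \<in> E" "{vs ! prv, vs ! j} \<in> E"
    using edge j idx unfolding l_def by (metis insert_commute)+
  moreover have "vs ! nxt \<noteq> vs ! j" "vs ! prv \<noteq> vs ! j" "vs ! nxt \<noteq> vs ! prv"
    using dist idx j by (auto simp: nth_eq_iff_index_eq l_def)
  moreover have to_parent: "vs ! i = parent (vs ! j)"
    if "i < l" "{vs ! i, vs ! j} \<in> E" "vs ! i \<noteq> vs ! j" for i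
    using ranked[OF that(2,3)] below_top[OF that(1)] by auto
  ultimately have "vs ! nxt = parent (vs ! j)" "vs ! prv = parent (vs ! j)"
    using idx by blast+
  with \<open>vs ! nxt \<noteq> vs ! prv\<close> show False by simp
qed

definition simple_path :: "nat set set \<Rightarrow> nat set \<Rightarrow> nat list \<Rightarrow> bool" where
  "simple_path E S ps \<longleftrightarrow> distinct ps \<and> set ps \<subseteq> S \<and>
     (\<forall>i. Suc i < length ps \<longrightarrow> {ps ! i, ps ! Suc i} \<in> E)"

text \<open>The first vertex of a longest path in \<open>S\<close> has a neighbour in \<open>S\<close> other than the second
  vertex; by maximality it lies on the path, which closes a cycle.\<close>
lemma has_cycle_if_min_degree_two:
  assumes fin: "finite S" and v0: "v0 \<in> S"
    and two_nbrs: "\<And>v. v \<in> S \<Longrightarrow> \<exists>a b. a \<in> S \<and> b \<in> S \<and> a \<noteq> b \<and> a \<noteq> v \<and> b \<noteq> v \<and>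
      {v, a} \<in> E \<and> {v, b} \<in> E"
  shows "has_cycle E"
proof -
  define has_path where "has_path = (\<lambda>l. \<exists>ps. simple_path E S ps \<and> length ps = l)"
  have one: "has_path 1"
    unfolding has_path_def simple_path_def using v0 by (intro exI[of _ "[v0]"]) auto
  have bounded: "\<forall>l. has_path l \<longrightarrow> l \<le> card S"
  proof (intro allI impI)
    fix l assume path: "has_path l"
    obtain ps where "simple_path E S ps" "length ps = l"
      using path unfolding has_path_def by blast
    then show "l \<le> card S"
      using fin card_mono distinct_card unfolding simple_path_def by metis
  qed
  obtain L where "has_path L" and longest: "\<forall>l. has_path l \<longrightarrow> l \<le> L"
    using Nat.ex_has_greatest_nat[OF one bounded] by blast
  then obtain ps where ps: "simple_path E S ps" "length ps = L"
    unfolding has_path_def by blast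
  have "L \<ge> 1" using one longest by auto
  define v where "v = ps ! 0"
  have "v \<in> S"
    using ps \<open>L \<ge> 1\<close> unfolding simple_path_def v_def by (metis One_nat_def Suc_le_eq in_mono nth_mem)
  then obtain w where w: "w \<in> S" "w \<noteq> v" "{v, w} \<in> E" "2 \<le> L \<longrightarrow> w \<noteq> ps ! 1"
    using two_nbrs by metis
  show ?thesis
  proof (cases "w \<in> set ps")
    case False
    have "simple_path E S (w # ps)"
      using ps w False unfolding simple_path_def v_def
      by (auto simp: nth_Cons split: nat.splits) (metis insert_commute)+
    then have "has_path (Suc L)" unfolding has_path_def using ps by (intro exI[of _ "w # ps"]) auto
    with longest show ?thesis by fastforce
  next
    case True
    then obtain j where j: "j < L" "ps ! j = w" using ps by (auto simp: in_set_conv_nth)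
    have "j \<noteq> 0" using j(2) w(2) v_def by metis
    moreover have "j \<noteq> 1"
    proof
      assume "j = 1"
      with j have "2 \<le> L" "ps ! 1 = w" by auto
      with w(4) show False by blast
    qed
    define vs where "vs = take (j + 1) ps"
    have len: "length vs = j + 1" using j ps by (simp add: vs_def)
    show ?thesis unfolding has_cycle_def
    proof (intro exI[of _ vs] conjI allI impI)
      show "3 \<le> length vs" using len \<open>j \<noteq> 0\<close> \<open>j \<noteq> 1\<close> by simp
      show "distinct vs" using ps unfolding vs_def simple_path_def by simp
      fix i assume "i < length vs"
      then consider "i = j" | "i < j" using len by linarith
      then show "{vs ! i, vs ! ((i + 1) mod length vs)} \<in> E"
      proof cases
        case 1
        then show ?thesis using len w j unfolding vs_def v_def by (simp add: insert_commute)
      next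
        case 2
        then show ?thesis using len ps j unfolding vs_def simple_path_def by auto
      qed
    qed
  qed
qed

section \<open>The ladder gadget\<close>

text \<open>Level \<open>i\<close> has the vertices \<open>vert i 0\<close> and \<open>vert i 1\<close> of tracks 0 and 1, and
  \<open>vert i 2\<close>, \<open>vert i 3\<close> through which Alice hands the tracks over to Bob when \<open>i \<in> x\<close>;
  Bob leads them on to level \<open>i + 1\<close>, crossing them iff \<open>i \<in> y\<close>.\<close>
definition vert :: "nat \<Rightarrow> nat \<Rightarrow> nat" where
  "vert i c = 4 * i + c"

lemma vert_div [simp]: "c < 4 \<Longrightarrow> vert i c div 4 = i"
  and vert_mod [simp]: "c < 4 \<Longrightarrow> vert i c mod 4 = c"
  unfolding vert_def by auto

lemma vert_eq_iff [simp]: "c < 4 \<Longrightarrow> d < 4 \<Longrightarrow> vert i c = vert j d \<longleftrightarrow> i = j \<and> c = d"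
  by (metis vert_div vert_mod)

text \<open>The track on which the walk from \<open>vert 0 0\<close> reaches level \<open>i\<close>.\<close>
fun track :: "nat set \<Rightarrow> nat set \<Rightarrow> nat \<Rightarrow> bool" where
  "track x y 0 = False"
| "track x y (Suc i) = (track x y i \<noteq> (i \<in> x \<and> i \<in> y))"

lemma track_iff_odd_card: "track x y i \<longleftrightarrow> odd (card (x \<inter> y \<inter> {..<i}))"
proof (induction i)
  case (Suc i)
  have "x \<inter> y \<inter> {..<Suc i} =
      (if i \<in> x \<and> i \<in> y then insert i (x \<inter> y \<inter> {..<i}) else x \<inter> y \<inter> {..<i})"
    by (auto simp: less_Suc_eq)
  with Suc show ?case by auto
qed simp

definition alice_edges :: "nat \<Rightarrow> nat set \<Rightarrow> nat set set" where
  "alice_edges k x = insert {vert 0 0, vert k 0} (\<Union>i<k.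
     if i \<in> x then {{vert i 0, vert i 2}, {vert i 1, vert i 3}}
     else {{vert i 0, vert (Suc i) 0}, {vert i 1, vert (Suc i) 1}})"

definition bob_edges :: "nat \<Rightarrow> nat set \<Rightarrow> nat set set" where
  "bob_edges k y = (\<Union>i<k.
     if i \<in> y then {{vert i 2, vert (Suc i) 1}, {vert i 3, vert (Suc i) 0}}
     else {{vert i 2, vert (Suc i) 0}, {vert i 3, vert (Suc i) 1}})"

lemma alice_edgesI:
  "i < k \<Longrightarrow> i \<in> x \<Longrightarrow> {vert i 0, vert i 2} \<in> alice_edges k x"
  "i < k \<Longrightarrow> i \<in> x \<Longrightarrow> {vert i 1, vert i 3} \<in> alice_edges k x"
  "i < k \<Longrightarrow> i \<notin> x \<Longrightarrow> {vert i 0, vert (Suc i) 0} \<in> alice_edges k x"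
  "i < k \<Longrightarrow> i \<notin> x \<Longrightarrow> {vert i 1, vert (Suc i) 1} \<in> alice_edges k x"
  "{vert 0 0, vert k 0} \<in> alice_edges k x"
  unfolding alice_edges_def by (auto intro!: bexI[of _ i])

lemma bob_edgesI:
  "i < k \<Longrightarrow> i \<in> y \<Longrightarrow> {vert i 2, vert (Suc i) 1} \<in> bob_edges k y"
  "i < k \<Longrightarrow> i \<in> y \<Longrightarrow> {vert i 3, vert (Suc i) 0} \<in> bob_edges k y"
  "i < k \<Longrightarrow> i \<notin> y \<Longrightarrow> {vert i 2, vert (Suc i) 0} \<in> bob_edges k y"
  "i < k \<Longrightarrow> i \<notin> y \<Longrightarrow> {vert i 3, vert (Suc i) 1} \<in> bob_edges k y"
  unfolding bob_edges_def by (auto intro!: bexI[of _ i])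

text \<open>On even track the walk from \<open>vert 0 0\<close> reaches \<open>vert k 0\<close>, and the closing edge returns.\<close>
lemma has_cycle_if_even_track:
  assumes k: "2 \<le> k" and even_track: "\<not> track x y k"
  shows "has_cycle (alice_edges k x \<union> bob_edges k y)"
proof -
  define E where "E = alice_edges k x \<union> bob_edges k y"
  define left where "left = (\<lambda>i. vert i (if track x y i then 1 else 0))"
  define right where "right = (\<lambda>i. vert i (if track x y i then 3 else 2))"
  define nxt where "nxt = (\<lambda>i. if i \<in> x then right i else left (Suc i))"
  define prv where "prv = (\<lambda>i. if i \<in> x then right i else left i)"
  define S where "S = left ` {..k} \<union> right ` {i. i < k \<and> i \<in> x}"
  have edge_nxt: "{left i, nxt i} \<in> E" if "i < k" for i
    using that unfolding E_def nxt_def left_def right_def by (auto simp: alice_edgesI[simplified])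
  have edge_right: "{right i, left (Suc i)} \<in> E" if "i < k" "i \<in> x" for i
    using that unfolding E_def left_def right_def by (auto simp: bob_edgesI[simplified])
  have edge_prv: "{left (Suc i), prv i} \<in> E" if "i < k" for i
    using edge_right[OF that] edge_nxt[OF that] unfolding prv_def nxt_def
    by (auto simp: insert_commute)
  have left_0: "left 0 = vert 0 0" and left_k: "left k = vert k 0"
    using even_track by (simp_all add: left_def)
  have edge_close: "{left 0, left k} \<in> E"
    unfolding left_0 left_k E_def by (simp add: alice_edgesI)
  have nxt_in: "nxt i \<in> S" and prv_in: "prv i \<in> S" if "i < k" for i
    using that unfolding nxt_def prv_def S_def by auto
  have nxt_range: "4 * i + 2 \<le> nxt i \<and> nxt i \<le> 4 * i + 5"
    and prv_range: "4 * i \<le> prv i \<and> prv i \<le> 4 * i + 3"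
    and left_range: "4 * i \<le> left i \<and> left i \<le> 4 * i + 1" for i
    unfolding nxt_def prv_def left_def right_def vert_def by auto
  show ?thesis unfolding E_def[symmetric]
  proof (rule has_cycle_if_min_degree_two[of S "left 0"])
    show "finite S" "left 0 \<in> S" unfolding S_def by auto
    fix v assume "v \<in> S"
    then consider (left) i where "i \<le> k" "v = left i" | (right) i where "i < k" "i \<in> x" "v = right i"
      unfolding S_def by auto
    then show "\<exists>a b. a \<in> S \<and> b \<in> S \<and> a \<noteq> b \<and> a \<noteq> v \<and> b \<noteq> v \<and> {v, a} \<in> E \<and> {v, b} \<in> E"
    proof cases
      case (right i)
      show ?thesis
      proof (intro exI conjI)
        show "left i \<in> S" "left (Suc i) \<in> S" using right unfolding S_def by auto
        show "left i \<noteq> left (Suc i)" "left i \<noteq> v" "left (Suc i) \<noteq> v"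
          using right unfolding left_def right_def vert_def by auto
        show "{v, left i} \<in> E" using edge_nxt[of i] right unfolding nxt_def by (simp add: insert_commute)
        show "{v, left (Suc i)} \<in> E" using edge_right[of i] right by simp
      qed
    next
      case (left i)
      consider "i = 0" | j where "i = Suc j" "i < k" | j where "i = k" "k = Suc j"
        using left k by (metis le_neq_implies_less not0_implies_Suc)
      then show ?thesis
      proof cases
        case 1
        show ?thesis
        proof (intro exI conjI)
          show "left k \<in> S" "nxt 0 \<in> S" using nxt_in k unfolding S_def by auto
          show "left k \<noteq> nxt 0" "left k \<noteq> v" "nxt 0 \<noteq> v"
            using 1 left nxt_range[of 0] left_k left_0 k unfolding vert_def by auto
          show "{v, left k} \<in> E" using edge_close 1 left by simp
          show "{v, nxt 0} \<in> E" using edge_nxt[of 0] 1 left k by simp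
        qed
      next
        case (2 j)
        show ?thesis
        proof (intro exI conjI)
          show "prv j \<in> S" "nxt i \<in> S" using nxt_in prv_in 2 by auto
          show "prv j \<noteq> nxt i" "prv j \<noteq> v" "nxt i \<noteq> v"
            using left 2 nxt_range[of i] prv_range[of j] left_range[of i] by auto
          show "{v, prv j} \<in> E" using edge_prv[of j] left 2 by simp
          show "{v, nxt i} \<in> E" using edge_nxt[of i] left 2 by simp
        qed
      next
        case (3 j)
        show ?thesis
        proof (intro exI conjI)
          show "prv j \<in> S" "left 0 \<in> S" using prv_in 3 unfolding S_def by auto
          show "prv j \<noteq> left 0" "prv j \<noteq> v" "left 0 \<noteq> v"
            using left 3 prv_range[of j] left_k left_0 k unfolding vert_def by auto
          show "{v, prv j} \<in> E" using edge_prv[of j] left 3 by simp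
          show "{v, left 0} \<in> E" using edge_close left 3 by (simp add: insert_commute)
        qed
      qed
    qed
  qed
qed

text \<open>For odd \<open>card (x \<inter> y)\<close> the edges form a forest rooted at \<open>vert 0 0\<close>: ranks increase along
  the walk from the root, and, beyond the closing edge, along the walk on the opposite track back
  from level \<open>k\<close>; the right vertices of levels \<open>i \<notin> x\<close> are leaves hanging off level \<open>i + 1\<close>.\<close>
definition gadget_rank :: "nat \<Rightarrow> nat set \<Rightarrow> nat set \<Rightarrow> nat \<Rightarrow> nat" where
  "gadget_rank k x y v = (let i = v div 4; c = v mod 4; R = 3 * k + 3 in
    if 2 \<le> c \<and> i \<notin> x then 2 * R + 4 * i + c
    else if odd c = track x y i then (if 2 \<le> c then 3 * i + 1 else 3 * i)
    else (if 2 \<le> c then R + 3 * (k - i) + 1 else R + 3 * (k - i) + 2))"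

definition gadget_parent :: "nat \<Rightarrow> nat set \<Rightarrow> nat set \<Rightarrow> nat \<Rightarrow> nat" where
  "gadget_parent k x y v = (let i = v div 4; c = v mod 4 in
    if 2 \<le> c \<and> i \<notin> x then vert (Suc i) (if odd c \<noteq> (i \<in> y) then 1 else 0)
    else if odd c = track x y i then
      (if 2 \<le> c then vert i (c - 2)
       else if i - 1 \<in> x then vert (i - 1) (if track x y (i - 1) then 3 else 2)
       else vert (i - 1) c)
    else (if 2 \<le> c then vert (Suc i) (if track x y (Suc i) then 0 else 1)
       else if i = k then vert 0 0 else if i \<in> x then vert i (c + 2) else vert (Suc i) c))"

definition ranked_edge :: "nat \<Rightarrow> nat set \<Rightarrow> nat set \<Rightarrow> nat \<Rightarrow> nat \<Rightarrow> bool" where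
  "ranked_edge k x y a b \<longleftrightarrow> gadget_rank k x y a \<noteq> gadget_rank k x y b \<and>
     (gadget_rank k x y a < gadget_rank k x y b \<longrightarrow> a = gadget_parent k x y b)"

lemma ranked_edge_both_ways:
  "i < k \<Longrightarrow> i \<in> x \<Longrightarrow> ranked_edge k x y (vert i 0) (vert i 2) \<and> ranked_edge k x y (vert i 2) (vert i 0)"
  "i < k \<Longrightarrow> i \<in> x \<Longrightarrow> ranked_edge k x y (vert i 1) (vert i 3) \<and> ranked_edge k x y (vert i 3) (vert i 1)"
  "i < k \<Longrightarrow> i \<notin> x \<Longrightarrow>
    ranked_edge k x y (vert i 0) (vert (Suc i) 0) \<and> ranked_edge k x y (vert (Suc i) 0) (vert i 0)"
  "i < k \<Longrightarrow> i \<notin> x \<Longrightarrow>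
    ranked_edge k x y (vert i 1) (vert (Suc i) 1) \<and> ranked_edge k x y (vert (Suc i) 1) (vert i 1)"
  "i < k \<Longrightarrow> i \<in> y \<Longrightarrow>
    ranked_edge k x y (vert i 2) (vert (Suc i) 1) \<and> ranked_edge k x y (vert (Suc i) 1) (vert i 2)"
  "i < k \<Longrightarrow> i \<in> y \<Longrightarrow>
    ranked_edge k x y (vert i 3) (vert (Suc i) 0) \<and> ranked_edge k x y (vert (Suc i) 0) (vert i 3)"
  "i < k \<Longrightarrow> i \<notin> y \<Longrightarrow>
    ranked_edge k x y (vert i 2) (vert (Suc i) 0) \<and> ranked_edge k x y (vert (Suc i) 0) (vert i 2)"
  "i < k \<Longrightarrow> i \<notin> y \<Longrightarrow>
    ranked_edge k x y (vert i 3) (vert (Suc i) 1) \<and> ranked_edge k x y (vert (Suc i) 1) (vert i 3)"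
  "2 \<le> k \<Longrightarrow> track x y k \<Longrightarrow>
    ranked_edge k x y (vert 0 0) (vert k 0) \<and> ranked_edge k x y (vert k 0) (vert 0 0)"
  by (cases "track x y i"; cases "i \<in> x";
      simp add: ranked_edge_def gadget_rank_def gadget_parent_def Let_def; arith)+

lemma ranked_gadget_edge:
  assumes k: "2 \<le> k" and odd_track: "track x y k"
    and e: "{a, b} \<in> alice_edges k x \<union> bob_edges k y"
  shows "ranked_edge k x y a b"
proof -
  have pair: "ranked_edge k x y a b"
    if "ranked_edge k x y u v \<and> ranked_edge k x y v u" "{a, b} = {u, v}" for u v
    using that by (metis doubleton_eq_iff)
  from e consider "{a, b} = {vert 0 0, vert k 0}"
    | i where "i < k" "i \<in> x" "{a, b} = {vert i 0, vert i 2} \<or> {a, b} = {vert i 1, vert i 3}"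
    | i where "i < k" "i \<notin> x"
        "{a, b} = {vert i 0, vert (Suc i) 0} \<or> {a, b} = {vert i 1, vert (Suc i) 1}"
    | i where "i < k" "i \<in> y"
        "{a, b} = {vert i 2, vert (Suc i) 1} \<or> {a, b} = {vert i 3, vert (Suc i) 0}"
    | i where "i < k" "i \<notin> y"
        "{a, b} = {vert i 2, vert (Suc i) 0} \<or> {a, b} = {vert i 3, vert (Suc i) 1}"
    unfolding alice_edges_def bob_edges_def by (fastforce split: if_splits)
  then show ?thesis
  proof cases
    case 1
    then show ?thesis using pair ranked_edge_both_ways(9)[OF k odd_track] by blast
  next
    case (2 i)
    then show ?thesis using pair ranked_edge_both_ways(1,2)[OF 2(1,2)] by blast
  next
    case (3 i)
    then show ?thesis using pair ranked_edge_both_ways(3,4)[OF 3(1,2)] by blast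
  next
    case (4 i)
    then show ?thesis using pair ranked_edge_both_ways(5,6)[OF 4(1,2)] by blast
  next
    case (5 i)
    then show ?thesis using pair ranked_edge_both_ways(7,8)[OF 5(1,2)] by blast
  qed
qed

lemma no_cycle_if_odd_track:
  assumes "2 \<le> k" "track x y k"
  shows "\<not> has_cycle (alice_edges k x \<union> bob_edges k y)"
  by (rule no_cycle_if_parent_ranking[where rank = "gadget_rank k x y" and parent = "gadget_parent k x y"])
     (use ranked_gadget_edge[OF assms] in \<open>auto simp: ranked_edge_def\<close>)

lemma has_cycle_gadget_iff:
  assumes "2 \<le> k" "x \<subseteq> {..<k}" "y \<subseteq> {..<k}"
  shows "has_cycle (alice_edges k x \<union> bob_edges k y) \<longleftrightarrow> even (card (x \<inter> y))"
proof -
  have "x \<inter> y \<inter> {..<k} = x \<inter> y" using assms by auto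
  then have "track x y k \<longleftrightarrow> odd (card (x \<inter> y))" by (simp add: track_iff_odd_card)
  then show ?thesis using has_cycle_if_even_track no_cycle_if_odd_track assms(1) by blast
qed

lemma card_doubleton_le: "card {a, b} \<le> 2"
  by (cases "a = b") auto

lemma card_alice_edges: "card (alice_edges k x) \<le> 2 * k + 1"
proof -
  let ?U = "\<Union>i<k. if i \<in> x then {{vert i 0, vert i 2}, {vert i 1, vert i 3}}
      else {{vert i 0, vert (Suc i) 0}, {vert i 1, vert (Suc i) 1}}"
  have "card ?U \<le> (\<Sum>i<k. card (if i \<in> x then {{vert i 0, vert i 2}, {vert i 1, vert i 3}}
      else {{vert i 0, vert (Suc i) 0}, {vert i 1, vert (Suc i) 1}}))"
    by (rule card_UN_le) simp
  also have "\<dots> \<le> (\<Sum>i<k. 2)"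
    by (intro sum_mono) (simp add: card_doubleton_le)
  finally have "card ?U \<le> 2 * k" by simp
  moreover have "card (alice_edges k x) \<le> Suc (card ?U)"
    unfolding alice_edges_def by (simp add: card_insert_if)
  ultimately show ?thesis by simp
qed

lemma card_bob_edges: "card (bob_edges k y) \<le> 2 * k"
proof -
  have "card (bob_edges k y) \<le> (\<Sum>i<k. card (if i \<in> y
      then {{vert i 2, vert (Suc i) 1}, {vert i 3, vert (Suc i) 0}}
      else {{vert i 2, vert (Suc i) 0}, {vert i 3, vert (Suc i) 1}}))"
    unfolding bob_edges_def by (rule card_UN_le) simp
  also have "\<dots> \<le> (\<Sum>i<k. 2)"
    by (intro sum_mono) (simp add: card_doubleton_le)
  finally show ?thesis by simp
qed

lemma alice_edge_within_level_or_column: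
  "e \<in> alice_edges k x \<Longrightarrow> \<exists>u v. e = {u, v} \<and> (u div 4 = v div 4 \<or> u mod 4 = v mod 4)"
  unfolding alice_edges_def by (fastforce split: if_splits)

lemma bob_edge_across_level_and_column:
  "e \<in> bob_edges k y \<Longrightarrow> \<exists>u v. e = {u, v} \<and> u div 4 \<noteq> v div 4 \<and> u mod 4 \<noteq> v mod 4"
  unfolding bob_edges_def by (fastforce split: if_splits)

lemma alice_bob_edges_disjoint: "alice_edges k x \<inter> bob_edges k y = {}"
proof (rule ccontr)
  assume "alice_edges k x \<inter> bob_edges k y \<noteq> {}"
  then obtain e where "e \<in> alice_edges k x" "e \<in> bob_edges k y" by blast
  then obtain u v u' v' where "e = {u, v}" "u div 4 = v div 4 \<or> u mod 4 = v mod 4"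
    and "e = {u', v'}" "u' div 4 \<noteq> v' div 4" "u' mod 4 \<noteq> v' mod 4"
    using alice_edge_within_level_or_column bob_edge_across_level_and_column by metis
  then show False by (auto simp: doubleton_eq_iff)
qed

lemma edges_onI: "u \<noteq> v \<Longrightarrow> u < n \<Longrightarrow> v < n \<Longrightarrow> {u, v} \<in> edges_on n"
  unfolding edges_on_def by blast

lemma valid_input_gadget:
  assumes "1 \<le> k" "4 * k + 2 \<le> n" "4 * k + 1 \<le> m"
  shows "valid_input n m (alice_edges k x) (bob_edges k y)"
  unfolding valid_input_def
proof (intro conjI)
  show "alice_edges k x \<subseteq> edges_on n"
    using assms unfolding alice_edges_def vert_def by (auto intro!: edges_onI split: if_splits)
  show "bob_edges k y \<subseteq> edges_on n"
    using assms unfolding bob_edges_def vert_def by (auto intro!: edges_onI split: if_splits)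
  show "alice_edges k x \<inter> bob_edges k y = {}"
    by (rule alice_bob_edges_disjoint)
  have "card (alice_edges k x \<union> bob_edges k y) \<le> card (alice_edges k x) + card (bob_edges k y)"
    by (rule card_Un_le)
  with card_alice_edges[of k x] card_bob_edges[of k y] assms(3)
  show "card (alice_edges k x \<union> bob_edges k y) \<le> m" by linarith
qed

section \<open>Lindsey's lemma\<close>

text \<open>Orthogonality of the rows of the Hadamard matrix indexed by \<open>Pow K\<close>.\<close>
lemma sum_Pow_parity_product:
  assumes "finite K"
  shows "(\<Sum>x\<in>Pow K. (-1::real) ^ (card (x \<inter> y) + card (x \<inter> y'))) =
    (if K \<inter> y = K \<inter> y' then 2 ^ card K else 0)"
  using assms
proof (induction K rule: finite_induct)
  case (insert a K)
  define F where "F = (\<lambda>x. (-1::real) ^ (card (x \<inter> y) + card (x \<inter> y')))"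
  define s :: real where "s = (if (a \<in> y) = (a \<in> y') then 1 else -1)"
  have F_insert: "F (insert a x) = s * F x" if "x \<in> Pow K" for x
  proof -
    have "finite x" "a \<notin> x" using that insert finite_subset by auto
    then show ?thesis
      unfolding F_def s_def by (cases "a \<in> y"; cases "a \<in> y'") (auto simp: Int_insert_left)
  qed
  have "inj_on (insert a) (Pow K)"
    using insert unfolding inj_on_def by (metis PowD insert_ident subsetD)
  then have "(\<Sum>x\<in>insert a ` Pow K. F x) = s * (\<Sum>x\<in>Pow K. F x)"
    by (simp add: sum.reindex F_insert sum_distrib_left)
  moreover have "(\<Sum>x\<in>Pow (insert a K). F x) = (\<Sum>x\<in>Pow K. F x) + (\<Sum>x\<in>insert a ` Pow K. F x)"
    unfolding Pow_insert using insert by (intro sum.union_disjoint) auto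
  moreover have "insert a K \<inter> y = insert a K \<inter> y' \<longleftrightarrow> (a \<in> y) = (a \<in> y') \<and> K \<inter> y = K \<inter> y'"
    using insert by blast
  ultimately show ?case
    using insert.IH insert.hyps unfolding F_def[symmetric] s_def by auto
qed simp

lemma Lindsey_lemma:
  assumes fin: "finite K" and A: "A \<subseteq> Pow K" and B: "B \<subseteq> Pow K"
  shows "(\<Sum>x\<in>A. \<Sum>y\<in>B. (-1::real) ^ card (x \<inter> y))\<^sup>2 \<le> real (card A) * real (card B) * 2 ^ card K"
proof -
  define h where "h = (\<lambda>x y :: 'a set. (-1::real) ^ card (x \<inter> y))"
  have "finite B" using B fin by (auto intro: finite_subset)
  have "(\<Sum>x\<in>A. \<Sum>y\<in>B. h x y)\<^sup>2 \<le> (\<Sum>x\<in>A. (\<Sum>y\<in>B. h x y)\<^sup>2) * card A"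
    by (rule sum_squared_le_sum_of_squares)
  also have "(\<Sum>x\<in>A. (\<Sum>y\<in>B. h x y)\<^sup>2) \<le> (\<Sum>x\<in>Pow K. (\<Sum>y\<in>B. h x y)\<^sup>2)"
    using A fin by (intro sum_mono2) auto
  also have "\<dots> = (\<Sum>y\<in>B. \<Sum>y'\<in>B. \<Sum>x\<in>Pow K. h x y * h x y')"
    by (simp add: power2_eq_square sum_product sum.swap[of _ "Pow K"])
  also have "\<dots> = (\<Sum>y\<in>B. \<Sum>y'\<in>B. if y = y' then 2 ^ card K else 0)"
  proof (intro sum.cong refl)
    fix y y' assume "y \<in> B" "y' \<in> B"
    then have "K \<inter> y = y" "K \<inter> y' = y'" using B by auto
    then show "(\<Sum>x\<in>Pow K. h x y * h x y') = (if y = y' then 2 ^ card K else 0)"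
      using sum_Pow_parity_product[OF fin, of y y'] unfolding h_def by (simp add: power_add)
  qed
  also have "\<dots> = real (card B) * 2 ^ card K" using \<open>finite B\<close> by simp
  finally show ?thesis
    unfolding h_def by (simp add: mult_right_mono algebra_simps)
qed

section \<open>The discrepancy method\<close>

definition advantage ::
    "('a, 'b) proto \<Rightarrow> ('x \<Rightarrow> 'a) \<Rightarrow> ('y \<Rightarrow> 'b) \<Rightarrow> ('x \<Rightarrow> 'y \<Rightarrow> bool) \<Rightarrow> 'x set \<Rightarrow> 'y set \<Rightarrow> real" where
  "advantage p \<phi> \<psi> G A B = (\<Sum>x\<in>A. \<Sum>y\<in>B. if run p (\<phi> x) (\<psi> y) = G x y then 1 else -1)"

lemma advantage_cong:
  "(\<And>x y. x \<in> A \<Longrightarrow> y \<in> B \<Longrightarrow> run p (\<phi> x) (\<psi> y) = run q (\<phi> x) (\<psi> y)) \<Longrightarrow>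
    advantage p \<phi> \<psi> G A B = advantage q \<phi> \<psi> G A B"
  unfolding advantage_def by (intro sum.cong refl) auto

lemma advantage_split_rows:
  "finite A \<Longrightarrow> advantage p \<phi> \<psi> G A B = advantage p \<phi> \<psi> G (A \<inter> S) B + advantage p \<phi> \<psi> G (A - S) B"
  unfolding advantage_def by (rule sum.Int_Diff)

lemma advantage_split_columns:
  "finite B \<Longrightarrow> advantage p \<phi> \<psi> G A B = advantage p \<phi> \<psi> G A (B \<inter> S) + advantage p \<phi> \<psi> G A (B - S)"
  unfolding advantage_def sum.distrib[symmetric] by (intro sum.cong refl sum.Int_Diff)

lemma advantage_Out:
  "advantage (Out r) \<phi> \<psi> G A B = (if r then 1 else -1) * (\<Sum>x\<in>A. \<Sum>y\<in>B. if G x y then 1 else -1)"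
  unfolding advantage_def by (cases r) (auto simp: sum_negf[symmetric] intro!: sum.cong)

text \<open>The rectangle bound: a protocol of cost at most \<open>d\<close> partitions the inputs into at most
  \<open>2 ^ d\<close> rectangles, on each of which its output is constant.\<close>
lemma abs_advantage_le:
  assumes disc: "\<And>A B. A \<subseteq> X \<Longrightarrow> B \<subseteq> Y \<Longrightarrow> \<bar>\<Sum>x\<in>A. \<Sum>y\<in>B. if G x y then 1 else -1 :: real\<bar> \<le> D"
    and fin: "finite X" "finite Y"
  shows "A \<subseteq> X \<Longrightarrow> B \<subseteq> Y \<Longrightarrow> (\<And>x y. x \<in> A \<Longrightarrow> y \<in> B \<Longrightarrow> cost p (\<phi> x) (\<psi> y) \<le> d) \<Longrightarrow>
    \<bar>advantage p \<phi> \<psi> G A B\<bar> \<le> 2 ^ d * D"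
proof (induction p arbitrary: A B d)
  case (Out r)
  have "\<bar>advantage (Out r) \<phi> \<psi> G A B\<bar> \<le> D"
    using disc[OF Out.prems(1,2)] by (simp add: advantage_Out abs_mult)
  also have "D \<le> 2 ^ d * D"
    using disc[of "{}" "{}"] by (simp add: mult_le_cancel_right1)
  finally show ?case .
next
  case (Send1 f p0 p1)
  show ?case
  proof (cases "A = {} \<or> B = {}")
    case True
    then show ?thesis using disc[of "{}" "{}"] by (auto simp: advantage_def)
  next
    case False
    then obtain d' where d: "d = Suc d'"
      using Send1.prems(3) by (metis all_not_in_conv cost.simps(2) not0_implies_Suc not_less_eq_eq zero_le)
    define S where "S = {x. f (\<phi> x)}"
    have "advantage (Send1 f p0 p1) \<phi> \<psi> G A B =
        advantage (Send1 f p0 p1) \<phi> \<psi> G (A \<inter> S) B + advantage (Send1 f p0 p1) \<phi> \<psi> G (A - S) B"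
      using finite_subset[OF Send1.prems(1) fin(1)] by (rule advantage_split_rows)
    also have "advantage (Send1 f p0 p1) \<phi> \<psi> G (A \<inter> S) B = advantage p1 \<phi> \<psi> G (A \<inter> S) B"
      by (rule advantage_cong) (simp add: S_def)
    also have "advantage (Send1 f p0 p1) \<phi> \<psi> G (A - S) B = advantage p0 \<phi> \<psi> G (A - S) B"
      by (rule advantage_cong) (simp add: S_def)
    moreover have "\<bar>advantage p1 \<phi> \<psi> G (A \<inter> S) B\<bar> \<le> 2 ^ d' * D"
    proof (rule Send1.IH(2))
      show "A \<inter> S \<subseteq> X" "B \<subseteq> Y" using Send1.prems(1,2) by auto
      fix x y assume "x \<in> A \<inter> S" "y \<in> B"
      then show "cost p1 (\<phi> x) (\<psi> y) \<le> d'" using Send1.prems(3)[of x y] by (simp add: S_def d)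
    qed
    moreover have "\<bar>advantage p0 \<phi> \<psi> G (A - S) B\<bar> \<le> 2 ^ d' * D"
    proof (rule Send1.IH(1))
      show "A - S \<subseteq> X" "B \<subseteq> Y" using Send1.prems(1,2) by auto
      fix x y assume "x \<in> A - S" "y \<in> B"
      then show "cost p0 (\<phi> x) (\<psi> y) \<le> d'" using Send1.prems(3)[of x y] by (simp add: S_def d)
    qed
    ultimately show ?thesis by (simp add: d abs_triangle_ineq order_trans[OF abs_triangle_ineq])
  qed
next
  case (Send2 g p0 p1)
  show ?case
  proof (cases "A = {} \<or> B = {}")
    case True
    then show ?thesis using disc[of "{}" "{}"] by (auto simp: advantage_def)
  next
    case False
    then obtain d' where d: "d = Suc d'"
      using Send2.prems(3) by (metis all_not_in_conv cost.simps(3) not0_implies_Suc not_less_eq_eq zero_le)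
    define S where "S = {y. g (\<psi> y)}"
    have "advantage (Send2 g p0 p1) \<phi> \<psi> G A B =
        advantage (Send2 g p0 p1) \<phi> \<psi> G A (B \<inter> S) + advantage (Send2 g p0 p1) \<phi> \<psi> G A (B - S)"
      using finite_subset[OF Send2.prems(2) fin(2)] by (rule advantage_split_columns)
    also have "advantage (Send2 g p0 p1) \<phi> \<psi> G A (B \<inter> S) = advantage p1 \<phi> \<psi> G A (B \<inter> S)"
      by (rule advantage_cong) (simp add: S_def)
    also have "advantage (Send2 g p0 p1) \<phi> \<psi> G A (B - S) = advantage p0 \<phi> \<psi> G A (B - S)"
      by (rule advantage_cong) (simp add: S_def)
    moreover have "\<bar>advantage p1 \<phi> \<psi> G A (B \<inter> S)\<bar> \<le> 2 ^ d' * D"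
    proof (rule Send2.IH(2))
      show "A \<subseteq> X" "B \<inter> S \<subseteq> Y" using Send2.prems(1,2) by auto
      fix x y assume "x \<in> A" "y \<in> B \<inter> S"
      then show "cost p1 (\<phi> x) (\<psi> y) \<le> d'" using Send2.prems(3)[of x y] by (simp add: S_def d)
    qed
    moreover have "\<bar>advantage p0 \<phi> \<psi> G A (B - S)\<bar> \<le> 2 ^ d' * D"
    proof (rule Send2.IH(1))
      show "A \<subseteq> X" "B - S \<subseteq> Y" using Send2.prems(1,2) by auto
      fix x y assume "x \<in> A" "y \<in> B - S"
      then show "cost p0 (\<phi> x) (\<psi> y) \<le> d'" using Send2.prems(3)[of x y] by (simp add: S_def d)
    qed
    ultimately show ?thesis by (simp add: d abs_triangle_ineq order_trans[OF abs_triangle_ineq])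
  qed
qed

lemma randomized_discrepancy_bound:
  fixes P :: "('a, 'b) proto pmf"
  assumes disc: "\<And>A B. A \<subseteq> X \<Longrightarrow> B \<subseteq> Y \<Longrightarrow> \<bar>\<Sum>x\<in>A. \<Sum>y\<in>B. if G x y then 1 else -1 :: real\<bar> \<le> D"
    and fin: "finite X" "finite Y"
    and correct: "\<And>x y. x \<in> X \<Longrightarrow> y \<in> Y \<Longrightarrow>
      measure_pmf.prob P {p. run p (\<phi> x) (\<psi> y) = G x y} \<ge> 2/3"
    and cheap: "\<And>p x y. p \<in> set_pmf P \<Longrightarrow> x \<in> X \<Longrightarrow> y \<in> Y \<Longrightarrow> cost p (\<phi> x) (\<psi> y) \<le> d"
  shows "real (card X * card Y) / 3 \<le> 2 ^ d * D"
proof -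
  define sign where "sign x y p = (if run p (\<phi> x) (\<psi> y) = G x y then 1 else -1 :: real)" for x y p
  have bounded_integrable: "integrable (measure_pmf P) f" if "\<And>p. \<bar>f p\<bar> \<le> B" for f :: "_ \<Rightarrow> real" and B
    by (rule measure_pmf.integrable_const_bound[where B = B]) (use that in auto)
  have integrable_sign: "integrable (measure_pmf P) (sign x y)" for x y
    by (rule bounded_integrable[where B = 1]) (simp add: sign_def)
  have expectation_sign: "measure_pmf.expectation P (sign x y) \<ge> 1/3" if "x \<in> X" "y \<in> Y" for x y
  proof -
    let ?C = "{p. run p (\<phi> x) (\<psi> y) = G x y}"
    have "sign x y = (\<lambda>p. 2 * indicator ?C p - 1)"
      by (auto simp: sign_def indicator_def)
    moreover have "integrable (measure_pmf P) (\<lambda>p. 2 * indicator ?C p :: real)"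
      by (rule bounded_integrable[where B = 2]) (simp add: indicator_def)
    ultimately have "measure_pmf.expectation P (sign x y) = 2 * measure_pmf.prob P ?C - 1"
      by (simp add: measure_pmf.prob_space)
    with correct[OF that] show ?thesis by simp
  qed
  have "real (card X * card Y) / 3 = (\<Sum>x\<in>X. \<Sum>y\<in>Y. 1/3)" by simp
  also have "\<dots> \<le> (\<Sum>x\<in>X. \<Sum>y\<in>Y. measure_pmf.expectation P (sign x y))"
    using expectation_sign by (intro sum_mono) auto
  also have "\<dots> = measure_pmf.expectation P (\<lambda>p. advantage p \<phi> \<psi> G X Y)"
    unfolding advantage_def sign_def[symmetric] by (simp add: integrable_sign)
  also have "\<dots> \<le> 2 ^ d * D"
  proof (rule measure_pmf.integral_le_const)
    show "integrable (measure_pmf P) (\<lambda>p. advantage p \<phi> \<psi> G X Y)"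
      unfolding advantage_def sign_def[symmetric] by (simp add: integrable_sign)
    have "\<bar>advantage p \<phi> \<psi> G X Y\<bar> \<le> 2 ^ d * D" if "p \<in> set_pmf P" for p
      by (rule abs_advantage_le[OF disc fin]) (auto intro: cheap[OF that])
    then show "AE p in measure_pmf P. advantage p \<phi> \<psi> G X Y \<le> 2 ^ d * D"
      by (auto simp: AE_measure_pmf_iff abs_le_iff)
  qed
  finally show ?thesis .
qed

lemma inner_product_discrepancy:
  assumes "A \<subseteq> Pow {..<k}" "B \<subseteq> Pow {..<k}"
  shows "\<bar>\<Sum>x\<in>A. \<Sum>y\<in>B. if even (card (x \<inter> y)) then 1 else -1 :: real\<bar> \<le> sqrt (8 ^ k)"
proof -
  have "card A \<le> 2 ^ k" "card B \<le> 2 ^ k"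
    using assms card_mono[of "Pow {..<k}"] by (simp_all add: card_Pow)
  then have "real (card A) * real (card B) * 2 ^ k \<le> 2 ^ k * 2 ^ k * 2 ^ k"
    by (intro mult_mono) (auto dest: of_nat_mono[where 'a = real])
  also have "(2::real) ^ k * 2 ^ k * 2 ^ k = 8 ^ k"
    by (simp add: power_mult_distrib[symmetric])
  finally have "(\<Sum>x\<in>A. \<Sum>y\<in>B. (-1::real) ^ card (x \<inter> y))\<^sup>2 \<le> 8 ^ k"
    using Lindsey_lemma[of "{..<k}" A B] assms by simp
  then show ?thesis
    by (intro real_le_rsqrt) (simp add: minus_one_power_iff)
qed

lemma exponent_bound:
  assumes "(4::real) ^ k / 3 \<le> 2 ^ d * sqrt (8 ^ k)"
  shows "k < 2 * d + 4"
proof -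
  have "((4::real) ^ k / 3)\<^sup>2 \<le> (2 ^ d * sqrt (8 ^ k))\<^sup>2"
    using assms by (intro power_mono) auto
  moreover have "((4::real) ^ k / 3)\<^sup>2 = 2 ^ k * 8 ^ k / 9"
    by (simp add: power2_eq_square flip: power_mult_distrib)
  moreover have "((2::real) ^ d * sqrt (8 ^ k))\<^sup>2 = 4 ^ d * 8 ^ k"
    by (simp add: power_mult_distrib flip: power_mult power2_eq_square)
      (simp add: power_mult mult.commute[of d])
  ultimately have "(2::real) ^ k \<le> 9 * 4 ^ d"
    by (simp add: field_simps)
  also have "\<dots> < 2 ^ (2 * d + 4)"
    by (simp add: power_add power_mult)
  finally show ?thesis
    by (rule power_less_imp_less_exp[rotated]) simp
qed

lemma randomized_inner_product_cost:
  fixes P :: "('a, 'b) proto pmf"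
  assumes correct: "\<And>x y. x \<subseteq> {..<k} \<Longrightarrow> y \<subseteq> {..<k} \<Longrightarrow>
      measure_pmf.prob P {p. run p (\<phi> x) (\<psi> y) = even (card (x \<inter> y))} \<ge> 2/3"
    and cheap: "\<And>p x y. p \<in> set_pmf P \<Longrightarrow> x \<subseteq> {..<k} \<Longrightarrow> y \<subseteq> {..<k} \<Longrightarrow>
      cost p (\<phi> x) (\<psi> y) \<le> d"
  shows "k < 2 * d + 4"
proof (rule exponent_bound)
  have "real (card (Pow {..<k}) * card (Pow {..<k})) / 3 \<le> 2 ^ d * sqrt (8 ^ k)"
    by (rule randomized_discrepancy_bound[where G = "\<lambda>x y. even (card (x \<inter> y))"])
       (use inner_product_discrepancy correct cheap in auto)
  then show "(4::real) ^ k / 3 \<le> 2 ^ d * sqrt (8 ^ k)"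
    by (simp add: card_Pow flip: power_mult_distrib)
qed

section \<open>Cycle detection\<close>

lemma randomized_cycle_detection_cost:
  assumes k: "4 \<le> k" "4 * k + 2 \<le> n" "4 * k + 1 \<le> m" and dec: "decides_cycle n m (1/3) P"
  shows "\<exists>p \<in> set_pmf P. \<exists>E1 E2. valid_input n m E1 E2 \<and> k \<le> 2 * cost p E1 E2 + 3"
proof (rule ccontr)
  assume cheap_all: "\<not> ?thesis"
  have valid: "valid_input n m (alice_edges k x) (bob_edges k y)" for x y
    using k by (intro valid_input_gadget) auto
  have "k < 2 * ((k - 4) div 2) + 4"
  proof (rule randomized_inner_product_cost[where \<phi> = "alice_edges k" and \<psi> = "bob_edges k"])
    fix x y assume xy: "x \<subseteq> {..<k}" "y \<subseteq> {..<k}"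
    show "measure_pmf.prob P {p. run p (alice_edges k x) (bob_edges k y) = even (card (x \<inter> y))} \<ge> 2/3"
      using dec valid[of x y] has_cycle_gadget_iff[OF _ xy] k unfolding decides_cycle_def by fastforce
  next
    fix p x y assume "p \<in> set_pmf P"
    then have "2 * cost p (alice_edges k x) (bob_edges k y) + 3 < k"
      using cheap_all valid[of x y] by force
    then show "cost p (alice_edges k x) (bob_edges k y) \<le> (k - 4) div 2" by linarith
  qed
  with k show False by linarith
qed

theorem corollary6p2:
  shows "\<exists>c::real. c > 0 \<and> (\<exists>N::nat. \<forall>n m P.
     N \<le> min m n \<longrightarrow> decides_cycle n m (1/3) P \<longrightarrow>
     (\<exists>p \<in> set_pmf P. \<exists>E1 E2. valid_input n m E1 E2 \<and>
        real (cost p E1 E2) \<ge> c * real (min m n)))"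
proof (intro exI[of _ "1/100"] conjI exI[of _ 100] allI impI)
  fix n m :: nat and P assume large: "100 \<le> min m n" and dec: "decides_cycle n m (1/3) P"
  define k where "k = (min m n - 2) div 4"
  have "4 \<le> k" "4 * k + 2 \<le> n" "4 * k + 1 \<le> m" "min m n \<le> 4 * k + 5"
    using large unfolding k_def by linarith+
  moreover obtain p E1 E2 where "p \<in> set_pmf P" "valid_input n m E1 E2" "k \<le> 2 * cost p E1 E2 + 3"
    using randomized_cycle_detection_cost[OF calculation(1-3) dec] by blast
  ultimately show "\<exists>p \<in> set_pmf P. \<exists>E1 E2. valid_input n m E1 E2 \<and>
      real (cost p E1 E2) \<ge> 1/100 * real (min m n)"
    by (intro bexI[of _ p] exI[of _ E1] exI[of _ E2]) auto
qed simp

end
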